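(* Suppose that $\mathbb{U}$ sends $\mathcal{H}_\mathcal{X}^-$ to $\mathcal{H}_Y^-$, so that $\mathbb{U} = U_0 + U_1 z^{-1} + \cdots + U_k z^{-k}$ for some non-negative integer $k$ and some linear maps $U_i: H^\bullet_{\mathrm{CR}}(\mathcal{X};\mathbb{C}) \to H^\bullet(Y;\mathbb{C})$. Then: (i) $U_0$ is grading-preserving; (ii) $U_0$ maps $\mathbf{1}_\mathcal{X}$ to $\mathbf{1}_Y$; (iii) $U_0$ maps $\rho \in H^2(\mathcal{X};\mathbb{C})$ to $\pi^\star\rho \in H^2(Y;\mathbb{C})$; (iv) $U_0$ identifies the orbifold Poincaré pairing on $H^\bullet_{\mathrm{CR}}(\mathcal{X};\mathbb{C})$ with the Poincaré pairing on $H^\bullet(Y;\mathbb{C})$.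
   Context: Let $\mathcal{X}$ be a Gorenstein orbifold (smooth Deligne–Mumford stack over $\mathbb{C}$) with projective coarse moduli space $X$ and trivial generic isotropy, and let $\pi: Y \to X$ be a crepant resolution. $H^\bullet_{\mathrm{CR}}(\mathcal{X};\mathbb{C})$ denotes Chen–Ruan orbifold cohomology, with Chen–Ruan product $\cup_{\mathrm{CR}}$ and orbifold Poincaré pairing. Let $\Lambda = \mathbb{C}[\![U_1,\ldots,U_s]\!]$ be the Novikov ring of $\mathcal{X}$. For $\mathcal{Z} = \mathcal{X}$ or $Y$, let $\mathcal{H}_\mathcal{Z} = H^\bullet_{\mathrm{CR}}(\mathcal{Z};\Lambda) \otimes \mathbb{C}(\!(z^{-1})\!)$ (with $\deg z = 2$), with symplectic form $\Omega_\mathcal{Z}(f,g) = \operatorname{Res}_{z=0}(f(-z),g(z))_\mathcal{Z}\,dz$, and Lagrangian subspaces $\mathcal{H}_\mathcal{Z}^+ = H^\bullet_{\mathrm{CR}}(\mathcal{Z};\Lambda)\otimes\mathbb{C}[z]$, $\mathcal{H}_\mathcal{Z}^- = z^{-1}H^\bullet_{\mathrm{CR}}(\mathcal{Z};\Lambda)\otimes\mathbb{C}[\![z^{-1}]\!]$; let $\mathcal{L}_\mathcal{Z} \subset \mathcal{H}_\mathcal{Z}$ be Givental's Lagrangian cone encoding genus-zero Gromov–Witten invariants. Assume (the Crepant Resolution Conjecture) that $\mathbb{U}: \mathcal{H}_\mathcal{X} \to \mathcal{H}_Y$ is a degree-preserving $\mathbb{C}(\!(z^{-1})\!)$-linear symplectic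 isomorphism with $\mathbb{U}(\mathcal{L}_\mathcal{X}) = \mathcal{L}_Y$ after analytic continuation, satisfying: (a) $\mathbb{U}(\mathbf{1}_\mathcal{X}) = \mathbf{1}_Y + O(z^{-1})$; (b) $\mathbb{U} \circ (\rho \cup_{\mathrm{CR}}) = (\pi^\star\rho \cup) \circ \mathbb{U}$ for every untwisted degree-two class $\rho \in H^2(\mathcal{X};\mathbb{C})$; (c) $\mathbb{U}(\mathcal{H}_\mathcal{X}^+) \oplus \mathcal{H}_Y^- = \mathcal{H}_Y$; (d) the matrix entries of $\mathbb{U}$ with respect to fixed homogeneous bases lie in $\mathbb{C}(\!(z^{-1})\!)$. *)

theory Defs
  imports Complex_Main
begin

text \<open>A cohomology space with a fixed finite homogeneous basis indexed by a finite type 'a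
 is modelled by vectors 'a \<Rightarrow> complex.  An element of H_Z = H \<otimes> C((z^-1)) is a
 function int \<Rightarrow> ('a \<Rightarrow> complex) giving the coefficient of z^n, with support
 bounded above.  A C((z^-1))-linear map H_X \<rightarrow> H_Y with matrix entries in C((z^-1))
 is a family of matrices int \<Rightarrow> ('b \<Rightarrow> 'a \<Rightarrow> complex) (coefficient of z^n),
 with support bounded above.\<close>

type_synonym 'a cvec = "'a \<Rightarrow> complex"
type_synonym ('b, 'a) cmat = "'b \<Rightarrow> 'a \<Rightarrow> complex"
type_synonym 'a laur = "int \<Rightarrow> 'a cvec"
type_synonym ('b, 'a) laurmap = "int \<Rightarrow> ('b, 'a) cmat"

definition mvec :: "('b, 'a::finite) cmat \<Rightarrow> 'a cvec \<Rightarrow> 'b cvec" where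
  "mvec M v = (\<lambda>b. \<Sum>a\<in>UNIV. M b a * v a)"

definition pair :: "('a::finite, 'a) cmat \<Rightarrow> 'a cvec \<Rightarrow> 'a cvec \<Rightarrow> complex" where
  "pair G v w = (\<Sum>a\<in>UNIV. \<Sum>a'\<in>UNIV. v a * G a a' * w a')"

definition cup :: "('a::finite \<Rightarrow> 'a \<Rightarrow> 'a \<Rightarrow> complex) \<Rightarrow> 'a cvec \<Rightarrow> 'a cvec \<Rightarrow> 'a cvec" where
  "cup C v w = (\<lambda>c. \<Sum>a\<in>UNIV. \<Sum>b\<in>UNIV. v a * w b * C a b c)"

definition laurent :: "'a laur set" where
  "laurent = {f. \<exists>N::int. \<forall>n>N. f n = (\<lambda>_. 0)}"

definition laurent_map :: "('b, 'a) laurmap \<Rightarrow> bool" where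
  "laurent_map U \<longleftrightarrow> (\<exists>N::int. \<forall>n>N. U n = (\<lambda>_ _. 0))"

text \<open>H^+ = H \<otimes> C[z] and H^- = z^-1 H \<otimes> C[[z^-1]].\<close>
definition Hplus :: "'a laur set" where
  "Hplus = {f. (\<forall>n<0. f n = (\<lambda>_. 0)) \<and> (\<exists>N::int. \<forall>n>N. f n = (\<lambda>_. 0))}"

definition Hminus :: "'a laur set" where
  "Hminus = {f. \<forall>n\<ge>0. f n = (\<lambda>_. 0)}"

text \<open>Application of a C((z^-1))-linear map: Cauchy product of Laurent series in z^-1
 (the index set is finite for elements of laurent).\<close>
definition lapply :: "('b, 'a::finite) laurmap \<Rightarrow> 'a laur \<Rightarrow> 'b laur" where
  "lapply U f = (\<lambda>n b. \<Sum>i\<in>{i. U i \<noteq> (\<lambda>_ _. 0) \<and> f (n - i) \<noteq> (\<lambda>_. 0)}. mvec (U i) (f (n - i)) b)"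

text \<open>Symplectic form Omega(f,g) = Res_{z=0} (f(-z), g(z)) dz.\<close>
definition Omega :: "('a::finite, 'a) cmat \<Rightarrow> 'a laur \<Rightarrow> 'a laur \<Rightarrow> complex" where
  "Omega G f g = (\<Sum>m\<in>{m. f m \<noteq> (\<lambda>_. 0) \<and> g (-1 - m) \<noteq> (\<lambda>_. 0)}.
      (if even m then 1 else -1) * pair G (f m) (g (-1 - m)))"

text \<open>Homogeneity with respect to the grading (deg z = 2).\<close>
definition homog_vec :: "('a \<Rightarrow> int) \<Rightarrow> 'a cvec \<Rightarrow> int \<Rightarrow> bool" where
  "homog_vec deg v d \<longleftrightarrow> (\<forall>a. v a \<noteq> 0 \<longrightarrow> deg a = d)"

definition homog_laur :: "('a \<Rightarrow> int) \<Rightarrow> 'a laur \<Rightarrow> int \<Rightarrow> bool" where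
  "homog_laur deg f d \<longleftrightarrow> (\<forall>n a. f n a \<noteq> 0 \<longrightarrow> deg a + 2 * n = d)"

definition degree_preserving ::
  "('a \<Rightarrow> int) \<Rightarrow> ('b \<Rightarrow> int) \<Rightarrow> ('b, 'a::finite) laurmap \<Rightarrow> bool" where
  "degree_preserving degX degY U \<longleftrightarrow>
     (\<forall>f d. f \<in> laurent \<longrightarrow> homog_laur degX f d \<longrightarrow> homog_laur degY (lapply U f) d)"

definition grading_preserving ::
  "('a \<Rightarrow> int) \<Rightarrow> ('b \<Rightarrow> int) \<Rightarrow> ('b, 'a::finite) cmat \<Rightarrow> bool" where
  "grading_preserving degX degY M \<longleftrightarrow>
     (\<forall>v d. homog_vec degX v d \<longrightarrow> homog_vec degY (mvec M v) d)"

definition const_laur :: "'a cvec \<Rightarrow> 'a laur" where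
  "const_laur v = (\<lambda>n. if n = 0 then v else (\<lambda>_. 0))"

definition cup_laur :: "('a::finite \<Rightarrow> 'a \<Rightarrow> 'a \<Rightarrow> complex) \<Rightarrow> 'a cvec \<Rightarrow> 'a laur \<Rightarrow> 'a laur" where
  "cup_laur C v f = (\<lambda>n. cup C v (f n))"

definition nondegenerate :: "('a::finite, 'a) cmat \<Rightarrow> bool" where
  "nondegenerate G \<longleftrightarrow> (\<forall>v. (\<forall>w. pair G v w = 0) \<longrightarrow> v = (\<lambda>_. 0))"

end

theory Submission
  imports Defs
begin

text \<open>Feeding constant series v z^0 into the hypotheses on \<open>U\<close> isolates the coefficient \<open>U 0\<close>:
  \<open>U\<close>(v z^0) has coefficient \<open>U 0 v\<close> at z^0 and nothing at positive powers.  For the pairing, apply the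
  symplectic condition to v z^0 and w z^{-1}: since \<open>U\<close> has no positive powers of z, the only
  contribution to the residue on either side comes from z^0 \<times> z^{-1}.\<close>

definition laur_monom :: "int \<Rightarrow> 'a cvec \<Rightarrow> 'a laur" where
  "laur_monom k v = (\<lambda>n. if n = k then v else (\<lambda>_. 0))"

lemma laur_monom_laurent: "laur_monom k v \<in> laurent"
  unfolding laurent_def laur_monom_def by (auto intro: exI[of _ k])

lemma const_laur_eq_laur_monom: "const_laur v = laur_monom 0 v"
  by (simp add: const_laur_def laur_monom_def)

lemma mvec_zero_right [simp]: "mvec M (\<lambda>_. 0) = (\<lambda>_. 0)"
  by (simp add: mvec_def)

lemma mvec_zero_left [simp]: "mvec (\<lambda>_ _. 0) v = (\<lambda>_. 0)"
  by (simp add: mvec_def)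

lemma pair_zero_left [simp]: "pair G (\<lambda>_. 0) w = 0"
  by (simp add: pair_def)

lemma pair_zero_right [simp]: "pair G v (\<lambda>_. 0) = 0"
  by (simp add: pair_def)

lemma cup_zero_right [simp]: "cup C v (\<lambda>_. 0) = (\<lambda>_. 0)"
  by (simp add: cup_def)

lemma lapply_laur_monom: "lapply U (laur_monom k v) = (\<lambda>n. mvec (U (n - k)) v)"
proof (intro ext)
  fix n b
  let ?S = "{i. U i \<noteq> (\<lambda>_ _. 0) \<and> laur_monom k v (n - i) \<noteq> (\<lambda>_. 0)}"
  have "lapply U (laur_monom k v) n b = (\<Sum>i\<in>?S. mvec (U i) (laur_monom k v (n - i)) b)"
    by (simp add: lapply_def)
  also have "\<dots> = (\<Sum>i\<in>{n - k}. mvec (U i) (laur_monom k v (n - i)) b)"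
    by (rule sum.mono_neutral_left) (auto simp: laur_monom_def)
  also have "\<dots> = mvec (U (n - k)) v b"
    by (simp add: laur_monom_def)
  finally show "lapply U (laur_monom k v) n b = mvec (U (n - k)) v b" .
qed

lemma lapply_const_laur: "lapply U (const_laur v) = (\<lambda>n. mvec (U n) v)"
  by (simp add: const_laur_eq_laur_monom lapply_laur_monom)

lemma cup_laur_const_laur: "cup_laur C \<rho> (const_laur v) = const_laur (cup C \<rho> v)"
  by (auto simp: cup_laur_def const_laur_def)

lemma Omega_eq_pair_residue_term:
  assumes f_neg: "\<And>n. n > 0 \<Longrightarrow> f n = (\<lambda>_. 0)"
    and g_neg: "\<And>n. n \<ge> 0 \<Longrightarrow> g n = (\<lambda>_. 0)"
  shows "Omega G f g = pair G (f 0) (g (-1))"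
proof -
  let ?t = "\<lambda>m. (if even m then 1 else -1) * pair G (f m) (g (-1 - m))"
  have "Omega G f g = (\<Sum>m\<in>{m. f m \<noteq> (\<lambda>_. 0) \<and> g (-1 - m) \<noteq> (\<lambda>_. 0)}. ?t m)"
    by (simp add: Omega_def)
  also have "\<dots> = (\<Sum>m\<in>{0}. ?t m)"
  proof (rule sum.mono_neutral_left)
    show "{m. f m \<noteq> (\<lambda>_. 0) \<and> g (-1 - m) \<noteq> (\<lambda>_. 0)} \<subseteq> {0}"
    proof
      fix m
      assume "m \<in> {m. f m \<noteq> (\<lambda>_. 0) \<and> g (-1 - m) \<noteq> (\<lambda>_. 0)}"
      then have "\<not> m > 0" and "\<not> -1 - m \<ge> 0"
        using f_neg g_neg by auto
      then show "m \<in> {0}" by simp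
    qed
  qed auto
  finally show ?thesis by simp
qed

lemma grading_preserving_coeff0:
  assumes "degree_preserving degX degY U"
  shows "grading_preserving degX degY (U 0)"
  unfolding grading_preserving_def
proof (intro allI impI)
  fix v d
  assume "homog_vec degX v d"
  then have "homog_laur degX (const_laur v) d"
    by (auto simp: homog_laur_def homog_vec_def const_laur_def)
  with assms have "homog_laur degY (\<lambda>n. mvec (U n) v) d"
    by (simp add: degree_preserving_def const_laur_eq_laur_monom laur_monom_laurent
        flip: lapply_const_laur)
  then show "homog_vec degY (mvec (U 0) v) d"
    by (auto simp: homog_laur_def homog_vec_def dest: spec[of _ 0])
qed

lemma coeff0_unit:
  assumes "lapply U (const_laur oneX) 0 = oneY"
  shows "mvec (U 0) oneX = oneY"
  using assms by (simp add: lapply_const_laur)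

lemma coeff0_divisor:
  assumes unitX: "cup CX \<rho> oneX = \<rho>" and unitY: "cup CY \<rho>' oneY = \<rho>'"
    and U_unit: "lapply U (const_laur oneX) 0 = oneY"
    and U_cup: "lapply U (cup_laur CX \<rho> (const_laur oneX))
                  = cup_laur CY \<rho>' (lapply U (const_laur oneX))"
  shows "mvec (U 0) \<rho> = \<rho>'"
proof -
  have "mvec (U 0) \<rho> = lapply U (cup_laur CX \<rho> (const_laur oneX)) 0"
    by (simp add: cup_laur_const_laur unitX lapply_const_laur)
  also have "\<dots> = cup_laur CY \<rho>' (lapply U (const_laur oneX)) 0"
    by (simp only: U_cup)
  also have "\<dots> = cup CY \<rho>' oneY"
    by (simp add: cup_laur_def U_unit)
  finally show ?thesis using unitY by simp
qed

lemma coeff0_pair: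
  assumes U_nonpos: "\<And>n. n > 0 \<Longrightarrow> U n = (\<lambda>_ _. 0)"
    and U_symp: "\<forall>f\<in>laurent. \<forall>g\<in>laurent. Omega GY (lapply U f) (lapply U g) = Omega GX f g"
  shows "pair GY (mvec (U 0) v) (mvec (U 0) w) = pair GX v w"
proof -
  have "pair GY (mvec (U 0) v) (mvec (U 0) w)
      = Omega GY (lapply U (laur_monom 0 v)) (lapply U (laur_monom (-1) w))"
    by (subst Omega_eq_pair_residue_term) (simp_all add: lapply_laur_monom U_nonpos)
  also have "\<dots> = Omega GX (laur_monom 0 v) (laur_monom (-1) w)"
    using U_symp laur_monom_laurent by blast
  also have "\<dots> = pair GX v w"
    by (subst Omega_eq_pair_residue_term) (simp_all add: laur_monom_def)
  finally show ?thesis .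
qed

theorem lemma5p2:
  fixes degX :: "'a::finite \<Rightarrow> int" and degY :: "'b::finite \<Rightarrow> int"
    and GX :: "('a, 'a) cmat" and GY :: "('b, 'b) cmat"
    and CX :: "'a \<Rightarrow> 'a \<Rightarrow> 'a \<Rightarrow> complex" and CY :: "'b \<Rightarrow> 'b \<Rightarrow> 'b \<Rightarrow> complex"
    and oneX :: "'a cvec" and oneY :: "'b cvec"
    and H2X :: "'a cvec set" and pistar :: "'a cvec \<Rightarrow> 'b cvec"
    and U :: "('b, 'a) laurmap"
  assumes GX_sym: "\<forall>a a'. GX a a' = GX a' a" and GY_sym: "\<forall>b b'. GY b b' = GY b' b"
    and GX_nd: "nondegenerate GX" and GY_nd: "nondegenerate GY"
    and unitX: "\<forall>v. cup CX oneX v = v \<and> cup CX v oneX = v"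
    and unitY: "\<forall>w. cup CY oneY w = w \<and> cup CY w oneY = w"
    and oneX_deg: "homog_vec degX oneX 0" and oneY_deg: "homog_vec degY oneY 0"
    and H2X_deg: "\<forall>\<rho>\<in>H2X. homog_vec degX \<rho> 2"
    and pistar_deg: "\<forall>\<rho>\<in>H2X. homog_vec degY (pistar \<rho>) 2"
    and U_laurent: "laurent_map U"
    and U_bij: "bij_betw (lapply U) laurent laurent"
    and U_symp: "\<forall>f\<in>laurent. \<forall>g\<in>laurent. Omega GY (lapply U f) (lapply U g) = Omega GX f g"
    and U_deg: "degree_preserving degX degY U"
    and cond_a: "lapply U (const_laur oneX) 0 = oneY \<and> (\<forall>n>0. lapply U (const_laur oneX) n = (\<lambda>_. 0))"
    and cond_b: "\<forall>\<rho>\<in>H2X. \<forall>f\<in>laurent.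
                   lapply U (cup_laur CX \<rho> f) = cup_laur CY (pistar \<rho>) (lapply U f)"
    and cond_c: "\<forall>h\<in>laurent. \<exists>!pq. fst pq \<in> Hplus \<and> snd pq \<in> Hminus \<and>
                   h = (\<lambda>n b. lapply U (fst pq) n b + snd pq n b)"
    and U_minus: "\<forall>f\<in>Hminus \<inter> laurent. lapply U f \<in> Hminus"
    and U_poly: "\<exists>k::nat. \<forall>n. (n > 0 \<or> n < - int k) \<longrightarrow> U n = (\<lambda>_ _. 0)"
  shows "grading_preserving degX degY (U 0)
       \<and> mvec (U 0) oneX = oneY
       \<and> (\<forall>\<rho>\<in>H2X. mvec (U 0) \<rho> = pistar \<rho>)
       \<and> (\<forall>v w. pair GY (mvec (U 0) v) (mvec (U 0) w) = pair GX v w)"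
proof -
  have U_nonpos: "U n = (\<lambda>_ _. 0)" if "n > 0" for n
    using U_poly that by blast
  have one_laurent: "const_laur oneX \<in> laurent"
    by (simp add: const_laur_eq_laur_monom laur_monom_laurent)
  have divisor: "mvec (U 0) \<rho> = pistar \<rho>" if "\<rho> \<in> H2X" for \<rho>
    using that unitX unitY cond_a cond_b one_laurent
    by (intro coeff0_divisor[of CX \<rho> oneX CY "pistar \<rho>" oneY U]) blast+
  show ?thesis
    using grading_preserving_coeff0[OF U_deg] coeff0_unit cond_a divisor
      coeff0_pair[OF U_nonpos U_symp] by blast
qed

end
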